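(* Let $A$ be a DFA over a finite alphabet $\Sigma$ and let $S=s_1,\ldots,s_l$ be a finite sequence of strings in $\Sigma^*$. In any execution of the prefix-free IDS algorithm on $S$ with teacher $A$, for each $t\geq 0$ the hypothesis automaton $M_t$ constructed by the construction procedure after $t$ input strings have been observed is a well-defined DFA; in particular its transition function is a well-defined function assigning a unique next state to every state $E_i(\alpha)$, $\alpha\in T_k$, and every input $b\in\Sigma$.
   Context: Let $A=\langle\Sigma,Q,F,q_0,\delta\rangle$ be a deterministic finite automaton (DFA) with finite input alphabet $\Sigma$, accepted language $L(A)\subseteq\Sigma^*$, and let $\lambda$ denote the empty string. A membership query asks whether a string lies in $L(A)$ and is answered correctly. Let $d_0$ be a fresh symbol not in $\Sigma^*$ and define $f:(\Sigma^*\cup\{d_0\})\times\Sigma\to\Sigma^*\cup\{d_0\}$ by $f(d_0,b)=d_0$ and $f(\alpha,b)=\alpha b$ for $\alpha\in\Sigma^*$. For sets $U,V$, $U\oplus V=(U-V)\cup(V-U)$. Prefix-free IDS algorithm (input: a sequence $S=s_1,\ldots,s_l$ of strings in $\Sigma^*$). It maintains integers $i,k,t$, distinguishing strings $v_0,\ldots,v_i$, sets $P_k\subseteq\Sigma^*$, $P'_k=P_k\cup\{d_0\}$, $T_k\subseteq\Sigma^*$, and for each $\alpha\in T_k$ a set $E_i(\alpha)\subseteq\{v_0,\ldots,v_i\}$; always $E_i(d_0)=\emptyset$. Refinement procedure (for current $k$): while there exist $\alpha,\beta\in P'_k$ and $b\in\Sigma$ with $E_i(\alpha)=E_i(\beta)$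 but $E_i(f(\alpha,b))\neq E_i(f(\beta,b))$: choose (nondeterministically) such $\alpha,\beta,b$ and some $\gamma\in E_i(f(\alpha,b))\oplus E_i(f(\beta,b))$, set $v_{i+1}=b\gamma$, increase $i$ by one, and for each $\alpha'\in T_k$ set $E_i(\alpha')=E_{i-1}(\alpha')\cup\{v_i\}$ if $\alpha' v_i\in L(A)$ and $E_i(\alpha')=E_{i-1}(\alpha')$ otherwise. Construction procedure (producing $M_t$): the states are the sets $E_i(\alpha)$, $\alpha\in T_k$; the initial state is $E_i(\lambda)$; the accepting states are those $E_i(\alpha)$ ($\alpha\in T_k$) with $\lambda\in E_i(\alpha)$; transitions: for each $\alpha\in P'_k$, if $E_i(\alpha)=\emptyset$ then $\delta(E_i(\alpha),b)=E_i(\alpha)$ for all $b\in\Sigma$, else $\delta(E_i(\alpha),b)=E_i(f(\alpha,b))$ for all $b\in\Sigma$; for each $\beta\in T_k-P'_k$ such that $E_i(\beta)\neq E_i(\alpha)$ for all $\alpha\in P'_k$ and $E_i(\beta)\neq\emptyset$, set $\delta(E_i(\beta),b)=\emptyset$ for all $b\in\Sigma$. Main algorithm: initialize $i=k=t=0$, $v_0=\lambda$, $P_0=\{\lambda\}$, $T_0=\{\lambda\}\cup\Sigma$, and for $\alpha\in T_0$ let $E_0(\alpha)=\{\lambda\}$ if $\alpha\in L(A)$, else $\emptyset$; run the refinement procedure, then the construction procedure, giving $M_0$. Then for each string $\alpha$ of $S$ in order: increase $k$ and $t$ by one; $P_k=P_{k-1}\cup\{\alpha\}$; $T_k=T_{k-1}\cup\{\alpha\}\cup\{\alpha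 b: b\in\Sigma\}$; for each $\beta\in T_k-T_{k-1}$ set $E_i(\beta)=\{v_j: 0\le j\le i,\ \beta v_j\in L(A)\}$; run the refinement procedure; if $M_{t-1}$ accepts $\alpha$ exactly when $\alpha\in L(A)$ then $M_t=M_{t-1}$, else $M_t$ is produced by the construction procedure. The algorithm stops when $S$ is exhausted. *)

theory Defs
  imports Main
begin

definition is_dfa :: "'a set \<Rightarrow> 's set \<Rightarrow> 's set \<Rightarrow> 's \<Rightarrow> ('s \<Rightarrow> 'a \<Rightarrow> 's) \<Rightarrow> bool" where
  "is_dfa \<Sigma> Q F q0 \<delta> \<longleftrightarrow> finite Q \<and> F \<subseteq> Q \<and> q0 \<in> Q \<and> (\<forall>q\<in>Q. \<forall>b\<in>\<Sigma>. \<delta> q b \<in> Q)"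

definition dfa_lang :: "'a set \<Rightarrow> 's set \<Rightarrow> 's \<Rightarrow> ('s \<Rightarrow> 'a \<Rightarrow> 's) \<Rightarrow> 'a list set" where
  "dfa_lang \<Sigma> F q0 \<delta> = {w. set w \<subseteq> \<Sigma> \<and> foldl \<delta> q0 w \<in> F}"

text \<open>Strings are lists; the fresh symbol d0 is None, a string alpha is Some alpha.
  The list vs holds v_0, ..., v_i (so i = length vs - 1).\<close>

record 'a ids_conf =
  vs :: "'a list list"
  Pk :: "'a list set"
  Tk :: "'a list set"
  Ek :: "'a list \<Rightarrow> 'a list set"

definition fD :: "'a list option \<Rightarrow> 'a \<Rightarrow> 'a list option" where
  "fD x b = (case x of None \<Rightarrow> None | Some \<alpha> \<Rightarrow> Some (\<alpha> @ [b]))"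

definition EE :: "'a ids_conf \<Rightarrow> 'a list option \<Rightarrow> 'a list set" where
  "EE c x = (case x of None \<Rightarrow> {} | Some \<alpha> \<Rightarrow> Ek c \<alpha>)"

definition Pk' :: "'a ids_conf \<Rightarrow> 'a list option set" where
  "Pk' c = Some ` Pk c \<union> {None}"

definition refine_step :: "'a set \<Rightarrow> 'a list set \<Rightarrow> 'a ids_conf \<Rightarrow> 'a ids_conf \<Rightarrow> bool" where
  "refine_step \<Sigma> L c c' \<longleftrightarrow>
     (\<exists>\<alpha>\<in>Pk' c. \<exists>\<beta>\<in>Pk' c. \<exists>b\<in>\<Sigma>. \<exists>\<gamma>.
        EE c \<alpha> = EE c \<beta> \<and> EE c (fD \<alpha> b) \<noteq> EE c (fD \<beta> b) \<and>
        \<gamma> \<in> (EE c (fD \<alpha> b) - EE c (fD \<beta> b)) \<union> (EE c (fD \<beta> b) - EE c (fD \<alpha> b)) \<and>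
        c' = c\<lparr> vs := vs c @ [b # \<gamma>],
               Ek := (\<lambda>\<alpha>'. if \<alpha>' \<in> Tk c \<and> \<alpha>' @ (b # \<gamma>) \<in> L
                            then Ek c \<alpha>' \<union> {b # \<gamma>} else Ek c \<alpha>') \<rparr>)"

definition refinement_done :: "'a set \<Rightarrow> 'a ids_conf \<Rightarrow> bool" where
  "refinement_done \<Sigma> c \<longleftrightarrow>
     \<not> (\<exists>\<alpha>\<in>Pk' c. \<exists>\<beta>\<in>Pk' c. \<exists>b\<in>\<Sigma>. EE c \<alpha> = EE c \<beta> \<and> EE c (fD \<alpha> b) \<noteq> EE c (fD \<beta> b))"

definition init_conf :: "'a set \<Rightarrow> 'a list set \<Rightarrow> 'a ids_conf" where
  "init_conf \<Sigma> L =
     (let T0 = {[]} \<union> {[b] | b. b \<in> \<Sigma>} in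
      \<lparr> vs = [[]], Pk = {[]}, Tk = T0,
        Ek = (\<lambda>\<alpha>. if \<alpha> \<in> T0 \<and> \<alpha> \<in> L then {[]} else {}) \<rparr>)"

definition add_string :: "'a set \<Rightarrow> 'a list set \<Rightarrow> 'a list \<Rightarrow> 'a ids_conf \<Rightarrow> 'a ids_conf" where
  "add_string \<Sigma> L \<alpha> c =
     (let T' = Tk c \<union> {\<alpha>} \<union> {\<alpha> @ [b] | b. b \<in> \<Sigma>} in
      c\<lparr> Pk := Pk c \<union> {\<alpha>}, Tk := T',
         Ek := (\<lambda>\<beta>. if \<beta> \<in> T' - Tk c then {v \<in> set (vs c). \<beta> @ v \<in> L} else Ek c \<beta>) \<rparr>)"

text \<open>Executions: ids_run Sigma L S k c means that c is a configuration reachable in some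
  execution of the algorithm on S after the first k strings of S have been read
  (k = t), at any point of the subsequent refinement procedure.\<close>
inductive ids_run :: "'a set \<Rightarrow> 'a list set \<Rightarrow> 'a list list \<Rightarrow> nat \<Rightarrow> 'a ids_conf \<Rightarrow> bool"
  for \<Sigma> L S where
  init: "ids_run \<Sigma> L S 0 (init_conf \<Sigma> L)"
| refine: "ids_run \<Sigma> L S k c \<Longrightarrow> refine_step \<Sigma> L c c' \<Longrightarrow> ids_run \<Sigma> L S k c'"
| next_str: "ids_run \<Sigma> L S k c \<Longrightarrow> refinement_done \<Sigma> c \<Longrightarrow> k < length S \<Longrightarrow>
             ids_run \<Sigma> L S (Suc k) (add_string \<Sigma> L (S ! k) c)"

definition hyp_states :: "'a ids_conf \<Rightarrow> 'a list set set" where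
  "hyp_states c = Ek c ` Tk c"

definition hyp_init :: "'a ids_conf \<Rightarrow> 'a list set" where
  "hyp_init c = Ek c []"

definition hyp_final :: "'a ids_conf \<Rightarrow> 'a list set set" where
  "hyp_final c = {q \<in> hyp_states c. [] \<in> q}"

text \<open>The transition assignments made by the construction procedure, as a set of
  triples (state, letter, next state).\<close>
definition hyp_trans :: "'a set \<Rightarrow> 'a ids_conf \<Rightarrow> ('a list set \<times> 'a \<times> 'a list set) set" where
  "hyp_trans \<Sigma> c =
     {(EE c \<alpha>, b, if EE c \<alpha> = {} then EE c \<alpha> else EE c (fD \<alpha> b)) | \<alpha> b.
        \<alpha> \<in> Pk' c \<and> b \<in> \<Sigma>}
   \<union> {(Ek c \<beta>, b, {}) | \<beta> b.
        \<beta> \<in> Tk c \<and> Some \<beta> \<notin> Pk' c \<and> (\<forall>\<alpha>\<in>Pk' c. Ek c \<beta> \<noteq> EE c \<alpha>) \<and> Ek c \<beta> \<noteq> {} \<and> b \<in> \<Sigma>}"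

end

theory Submission
  imports Defs
begin

text \<open>The transitions of the hypothesis are well defined because the refinement loop only stops
  once the state sets E(\<alpha>) of the prefixes \<alpha> \<in> P' are a congruence for appending a letter,
  so two prefixes naming the same state prescribe the same successor. Every successor
  E(\<alpha> b) is again a state because the table T always contains the one-letter extensions
  of the prefixes in P.\<close>

definition wf_ids_conf :: "'a set \<Rightarrow> 'a ids_conf \<Rightarrow> bool" where
  "wf_ids_conf \<Sigma> c \<longleftrightarrow>
     finite (Tk c) \<and> [] \<in> Tk c \<and> (\<forall>\<alpha>\<in>Pk c. \<forall>b\<in>\<Sigma>. \<alpha> @ [b] \<in> Tk c)"

lemma ids_run_wf_conf:
  assumes "finite \<Sigma>" and "ids_run \<Sigma> L S k c"
  shows "wf_ids_conf \<Sigma> c"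
  using assms(2)
proof induction
  case init
  have "{[b] | b. b \<in> \<Sigma>} = (\<lambda>b. [b]) ` \<Sigma>" by auto
  with assms(1) show ?case by (simp add: wf_ids_conf_def init_conf_def Let_def)
next
  case (refine k c c')
  then show ?case by (auto simp: wf_ids_conf_def refine_step_def)
next
  case (next_str k c)
  have "{S ! k @ [b] | b. b \<in> \<Sigma>} = (\<lambda>b. S ! k @ [b]) ` \<Sigma>" by auto
  with assms(1) next_str.IH show ?case
    by (auto simp: wf_ids_conf_def add_string_def Let_def)
qed

lemma refinement_done_EE_cong:
  assumes "refinement_done \<Sigma> c" and "\<alpha> \<in> Pk' c" and "\<beta> \<in> Pk' c" and "b \<in> \<Sigma>"
    and "EE c \<alpha> = EE c \<beta>"
  shows "EE c (fD \<alpha> b) = EE c (fD \<beta> b)"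
  using assms unfolding refinement_done_def by blast

definition hyp_succ :: "'a ids_conf \<Rightarrow> 'a list option \<Rightarrow> 'a \<Rightarrow> 'a list set" where
  "hyp_succ c \<alpha> b = (if EE c \<alpha> = {} then {} else EE c (fD \<alpha> b))"

lemma mem_hyp_trans_iff:
  "(q, b, q') \<in> hyp_trans \<Sigma> c \<longleftrightarrow> b \<in> \<Sigma> \<and>
     ((\<exists>\<alpha>\<in>Pk' c. q = EE c \<alpha> \<and> q' = hyp_succ c \<alpha> b) \<or>
      (\<exists>\<beta>\<in>Tk c. q = Ek c \<beta> \<and> q' = {} \<and> Some \<beta> \<notin> Pk' c \<and>
         (\<forall>\<alpha>\<in>Pk' c. q \<noteq> EE c \<alpha>) \<and> q \<noteq> {}))"
  unfolding hyp_trans_def hyp_succ_def by auto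

lemma None_in_Pk': "None \<in> Pk' c"
  by (simp add: Pk'_def)

lemma EE_None [simp]: "EE c None = {}"
  by (simp add: EE_def)

lemma hyp_trans_unique:
  assumes "refinement_done \<Sigma> c" and "q \<in> hyp_states c" and "b \<in> \<Sigma>"
  shows "\<exists>!q'. (q, b, q') \<in> hyp_trans \<Sigma> c"
proof (cases "\<exists>\<alpha>\<in>Pk' c. q = EE c \<alpha>")
  case True
  then obtain \<alpha> where \<alpha>: "\<alpha> \<in> Pk' c" "q = EE c \<alpha>" by blast
  show ?thesis
  proof (rule ex1I[of _ "hyp_succ c \<alpha> b"])
    show "(q, b, hyp_succ c \<alpha> b) \<in> hyp_trans \<Sigma> c"
      unfolding mem_hyp_trans_iff using \<alpha> assms(3) by blast
  next
    fix q' assume "(q, b, q') \<in> hyp_trans \<Sigma> c"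
    with True obtain \<alpha>' where \<alpha>': "\<alpha>' \<in> Pk' c" "q = EE c \<alpha>'" "q' = hyp_succ c \<alpha>' b"
      unfolding mem_hyp_trans_iff by blast
    have "EE c (fD \<alpha>' b) = EE c (fD \<alpha> b)"
      using refinement_done_EE_cong[OF assms(1) \<alpha>'(1) \<alpha>(1) assms(3)] \<alpha>(2) \<alpha>'(2) by simp
    with \<alpha> \<alpha>' show "q' = hyp_succ c \<alpha> b" by (simp add: hyp_succ_def)
  qed
next
  case False
  from assms(2) obtain \<beta> where \<beta>: "\<beta> \<in> Tk c" "q = Ek c \<beta>"
    by (auto simp: hyp_states_def)
  have "q \<noteq> {}" using False None_in_Pk' by fastforce
  moreover have "Some \<beta> \<notin> Pk' c"
  proof
    assume "Some \<beta> \<in> Pk' c"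
    with False \<beta>(2) show False by (force simp: EE_def)
  qed
  ultimately have "(q, b, {}) \<in> hyp_trans \<Sigma> c"
    unfolding mem_hyp_trans_iff using False \<beta> assms(3) by blast
  moreover have "q' = {}" if "(q, b, q') \<in> hyp_trans \<Sigma> c" for q'
    using that False unfolding mem_hyp_trans_iff by blast
  ultimately show ?thesis by blast
qed

lemma hyp_succ_in_states:
  assumes "wf_ids_conf \<Sigma> c" and "\<alpha> \<in> Pk' c" and "b \<in> \<Sigma>"
  shows "hyp_succ c \<alpha> b \<in> hyp_states c \<union> {{}}"
proof (cases \<alpha>)
  case (Some \<alpha>')
  with assms have "\<alpha>' @ [b] \<in> Tk c" by (auto simp: wf_ids_conf_def Pk'_def)
  with Some show ?thesis by (simp add: hyp_succ_def hyp_states_def EE_def fD_def)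
qed (simp add: hyp_succ_def)

lemma hyp_trans_target:
  assumes "wf_ids_conf \<Sigma> c" and "(q, b, q') \<in> hyp_trans \<Sigma> c"
  shows "q' \<in> hyp_states c \<union> {{}}"
  using assms hyp_succ_in_states[OF assms(1)] by (auto simp: mem_hyp_trans_iff)

theorem mainTheorem1:
  fixes \<Sigma> :: "'a set" and Q F :: "'s set" and q0 :: 's and \<delta> :: "'s \<Rightarrow> 'a \<Rightarrow> 's"
    and S :: "'a list list" and t :: nat and c :: "'a ids_conf"
  assumes "finite \<Sigma>"
    and "is_dfa \<Sigma> Q F q0 \<delta>"
    and "\<forall>s\<in>set S. set s \<subseteq> \<Sigma>"
    and "ids_run \<Sigma> (dfa_lang \<Sigma> F q0 \<delta>) S t c"
    and "refinement_done \<Sigma> c"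
  shows "finite (hyp_states c)
       \<and> hyp_init c \<in> hyp_states c
       \<and> hyp_final c \<subseteq> hyp_states c
       \<and> (\<forall>q\<in>hyp_states c. \<forall>b\<in>\<Sigma>. \<exists>!q'. (q, b, q') \<in> hyp_trans \<Sigma> c)
       \<and> (\<forall>(q, b, q')\<in>hyp_trans \<Sigma> c. q' \<in> hyp_states c \<union> {{}})"
proof -
  have wf: "wf_ids_conf \<Sigma> c" using ids_run_wf_conf[OF assms(1,4)] .
  then have "finite (hyp_states c)" and "hyp_init c \<in> hyp_states c"
    by (simp_all add: wf_ids_conf_def hyp_states_def hyp_init_def)
  moreover have "hyp_final c \<subseteq> hyp_states c" by (auto simp: hyp_final_def)
  ultimately show ?thesis
    using hyp_trans_unique[OF assms(5)] hyp_trans_target[OF wf] by blast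
qed

end
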